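(* Let $t>0$, $n\geq 3$, and let $\varphi_1,\dots,\varphi_n>0$ with $\varphi_1+\dots+\varphi_n=t$ (indices cyclic mod $n$). Let $\overline{\mathcal{P}}(\varphi_1,\dots,\varphi_n)\subset\mathbb{R}^n$ be the cone of support vectors and $\mathcal{P}(\varphi_1,\dots,\varphi_n)$ its intersection with the unit sphere of the Euclidean space $(\mathbb{R}^n,\operatorname{coarea})$. Then $\mathcal{P}(\varphi_1,\dots,\varphi_n)$ is a spherical simplex whose facets are contained in the hyperplanes $\{\ell_k=0\}$, $k=1,\dots,n$, where $\ell_k(h)=\frac{h_k\cosh\varphi_{k-1}-h_{k-1}}{\sinh\varphi_{k-1}}+\frac{h_k\cosh\varphi_k-h_{k+1}}{\sinh\varphi_k}$, and it is an acute spherical orthoscheme: the facets $\{\ell_k=0\}$ and $\{\ell_{k+1}=0\}$ meet at an acute interior dihedral angle $\alpha_k$ with $$\cos\alpha_k=\sqrt{\frac{\sinh\varphi_{k-1}\sinh\varphi_{k+1}}{\sinh(\varphi_{k-1}+\varphi_k)\sinh(\varphi_k+\varphi_{k+1})}},$$ and any two facets $\{\ell_k=0\}$, $\{\ell_j=0\}$ with $j\not\equiv k\pm1 \pmod n$ are orthogonal.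
   Context: Lorentz plane: $\mathbb{R}^2$ with $\langle x,y\rangle_1=x_1y_1-x_2y_2$; $\mathbb{H}=\{x:\langle x,x\rangle_1=-1,x_2>0\}$; $H_s=\begin{pmatrix}\cosh s&\sinh s\\ \sinh s&\cosh s\end{pmatrix}$. A $t$-convex polygon is the intersection over $k\in\mathbb{Z}$, $i=1,\dots,n$ of the half-planes $\{x:\langle x,H_t^k\eta_i\rangle_1\le -h_i\}$ for pairwise distinct $\eta_i\in\mathbb{H}$ and $h_i>0$, where each $\eta_i$ is the inward normal of a genuine edge; $(h_1,\dots,h_n)$ is its support vector. The cone of support vectors $\overline{\mathcal{P}}(\varphi_1,\dots,\varphi_n)$ is, for a fixed $\eta\in\mathbb{H}$, the set of support vectors of $t$-convex polygons whose fundamental edges have inward unit normals $\eta_1=\eta$, $\eta_{i+1}=H_{\varphi_i}\eta_i$ ($i=1,\dots,n$; note $\eta_{n+1}=H_t\eta_1$); up to linear isomorphism it does not depend on $\eta$, and $\ell_k(h)$ is the Lorentzian length of the $k$-th fundamental edge. The coarea form is $\operatorname{coarea}(h,k)=\frac12\sum_{i=1}^n\big(h_i\frac{k_i\cosh\varphi_{i-1}-k_{i-1}}{\sinh\varphi_{i-1}}+h_i\frac{k_i\cosh\varphi_i-k_{i+1}}{\sinh\varphi_i}\big)$ (indices mod $n$), a positive definite symmetric bilinear form on $\mathbb{R}^n$. An acute spherical orthoscheme is a spherical simplex each of whose facets makes an acute dihedral angle with exactly two other facets and is orthogonal to all remaining facets. *)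

theory Defs
  imports Complex_Main
begin

text \<open>Conventions: indices are 0-based and cyclic mod n, i.e. paper index i
corresponds to index i-1 here. Vectors of R^n are functions nat => real
vanishing outside {0..<n}.\<close>

definition vecs :: "nat \<Rightarrow> (nat \<Rightarrow> real) set" where
  "vecs n = {h. \<forall>i\<ge>n. h i = 0}"

definition lor :: "real \<times> real \<Rightarrow> real \<times> real \<Rightarrow> real" where
  "lor x y = fst x * fst y - snd x * snd y"

definition hyperbola :: "(real \<times> real) set" where
  "hyperbola = {x. lor x x = -1 \<and> snd x > 0}"

definition Hb :: "real \<Rightarrow> real \<times> real \<Rightarrow> real \<times> real" where
  "Hb s x = (cosh s * fst x + sinh s * snd x, sinh s * fst x + cosh s * snd x)"

text \<open>The polygon: intersection over k in Z and i < n of half-planes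
  <x, H_t^k eta_i> <= -h_i  (H_t^k = H_{k t}).\<close>
definition tpoly :: "real \<Rightarrow> nat \<Rightarrow> (nat \<Rightarrow> real \<times> real) \<Rightarrow> (nat \<Rightarrow> real) \<Rightarrow> (real \<times> real) set" where
  "tpoly t n eta h = {x. \<forall>k::int. \<forall>i<n. lor x (Hb (of_int k * t) (eta i)) \<le> - h i}"

definition genuine_edge :: "real \<Rightarrow> nat \<Rightarrow> (nat \<Rightarrow> real \<times> real) \<Rightarrow> (nat \<Rightarrow> real) \<Rightarrow> nat \<Rightarrow> bool" where
  "genuine_edge t n eta h i \<longleftrightarrow>
     (\<exists>x y. x \<noteq> y \<and> x \<in> tpoly t n eta h \<and> y \<in> tpoly t n eta h \<and>
            lor x (eta i) = - h i \<and> lor y (eta i) = - h i)"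

definition is_support_vector :: "real \<Rightarrow> nat \<Rightarrow> (nat \<Rightarrow> real \<times> real) \<Rightarrow> (nat \<Rightarrow> real) \<Rightarrow> bool" where
  "is_support_vector t n eta h \<longleftrightarrow>
     h \<in> vecs n \<and> (\<forall>i<n. eta i \<in> hyperbola) \<and> inj_on eta {..<n} \<and>
     (\<forall>i<n. h i > 0) \<and> (\<forall>i<n. genuine_edge t n eta h i)"

text \<open>Fundamental normals: eta_0 = eta, eta_{i+1} = H_{phi_i} eta_i.\<close>
definition fund_normals :: "(nat \<Rightarrow> real) \<Rightarrow> real \<times> real \<Rightarrow> nat \<Rightarrow> real \<times> real" where
  "fund_normals phi eta i = Hb (\<Sum>j<i. phi j) eta"

definition supp_cone :: "nat \<Rightarrow> (nat \<Rightarrow> real) \<Rightarrow> real \<times> real \<Rightarrow> (nat \<Rightarrow> real) set" where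
  "supp_cone n phi eta =
     {h. is_support_vector (\<Sum>j<n. phi j) n (fund_normals phi eta) h}"

definition prv :: "nat \<Rightarrow> nat \<Rightarrow> nat" where
  "prv n i = (i + n - 1) mod n"

definition nxt :: "nat \<Rightarrow> nat \<Rightarrow> nat" where
  "nxt n i = (i + 1) mod n"

definition ell :: "nat \<Rightarrow> (nat \<Rightarrow> real) \<Rightarrow> nat \<Rightarrow> (nat \<Rightarrow> real) \<Rightarrow> real" where
  "ell n phi k h =
     (h k * cosh (phi (prv n k)) - h (prv n k)) / sinh (phi (prv n k)) +
     (h k * cosh (phi k) - h (nxt n k)) / sinh (phi k)"

definition coarea :: "nat \<Rightarrow> (nat \<Rightarrow> real) \<Rightarrow> (nat \<Rightarrow> real) \<Rightarrow> (nat \<Rightarrow> real) \<Rightarrow> real" where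
  "coarea n phi h k = (1/2) * (\<Sum>i<n.
      h i * (k i * cosh (phi (prv n i)) - k (prv n i)) / sinh (phi (prv n i)) +
      h i * (k i * cosh (phi i) - k (nxt n i)) / sinh (phi i))"

definition riesz :: "nat \<Rightarrow> ((nat \<Rightarrow> real) \<Rightarrow> (nat \<Rightarrow> real) \<Rightarrow> real) \<Rightarrow> ((nat \<Rightarrow> real) \<Rightarrow> real) \<Rightarrow> nat \<Rightarrow> real" where
  "riesz n B f = (THE u. u \<in> vecs n \<and> (\<forall>h\<in>vecs n. B u h = f h))"

text \<open>Interior dihedral angle, in the Euclidean space (vecs n, B), between the facets
  {f = 0} and {g = 0} of a region lying in {f \<ge> 0, g \<ge> 0}: the supplement of the angle
  between the inward normals.\<close>
definition dihedral :: "nat \<Rightarrow> ((nat \<Rightarrow> real) \<Rightarrow> (nat \<Rightarrow> real) \<Rightarrow> real) \<Rightarrow> ((nat \<Rightarrow> real) \<Rightarrow> real) \<Rightarrow> ((nat \<Rightarrow> real) \<Rightarrow> real) \<Rightarrow> real" where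
  "dihedral n B f g =
     (let u = riesz n B f; v = riesz n B g
      in arccos (- B u v / sqrt (B u u * B v v)))"

end

theory Submission
  imports Defs
begin

text \<open>Since \<open>coarea h k = 1/2 \<Sum>\<^sub>i h\<^sub>i \<ell>\<^sub>i(k)\<close>, the functional \<open>\<ell>\<^sub>k\<close> is represented
  by \<open>2e\<^sub>k\<close>, so the Gram matrix of the facet normals is 4 times the matrix of the coarea form:
  it is tridiagonal-cyclic, which gives orthogonality of non-adjacent facets, and the
  adjacent entries give the dihedral angles. Positive definiteness follows from
  \<open>2 coarea(h,h) \<ge> \<Sum>\<^sub>i h\<^sub>i\<^sup>2 (cosh \<phi>\<^sub>i - 1)/sinh \<phi>\<^sub>i\<close>, and it makes the \<open>\<ell>\<^sub>k\<close> independent.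
  For the cone: writing the normals as \<open>(sinh \<theta>, cosh \<theta>)\<close>, the points of the \<open>i\<close>-th support
  line inside the polygon form an interval of the tangential coordinate of length \<open>\<ell>\<^sub>i(h)\<close>,
  so a genuine edge forces \<open>\<ell>\<^sub>i(h) > 0\<close>. Conversely, if all \<open>\<ell>\<^sub>i(h) \<ge> 0\<close>, the slack of a
  vertex against the successive support lines satisfies a second order recurrence with
  nonnegative forcing, and a discrete maximum principle shows that every vertex lies in
  the polygon.\<close>

lemma cosh_mult_cosh_minus_sinh_mult_sinh: "cosh (a::real) * cosh a - sinh a * sinh a = 1"
  using hyperbolic_pythagoras[of a] by (simp add: power2_eq_square)

lemma cosh_minus_one_div_sinh_pos: "(a::real) > 0 \<Longrightarrow> (cosh a - 1) / sinh a > 0"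
  using cosh_real_nonneg_less_iff[of 0 a] by simp

lemma coth_add_coth: "(a::real) > 0 \<Longrightarrow> b > 0 \<Longrightarrow>
    cosh a / sinh a + cosh b / sinh b = sinh (a + b) / (sinh a * sinh b)"
  by (simp add: field_simps sinh_add)

lemma sinh_superadditive: "(a::real) \<ge> 0 \<Longrightarrow> b \<ge> 0 \<Longrightarrow> sinh a + sinh b \<le> sinh (a + b)"
proof -
  assume a: "a \<ge> 0" and b: "b \<ge> 0"
  have "sinh a * 1 \<le> sinh a * cosh b" using a cosh_real_ge_1 by (intro mult_left_mono) auto
  moreover have "1 * sinh b \<le> cosh a * sinh b" using b cosh_real_ge_1 by (intro mult_right_mono) auto
  ultimately show ?thesis by (simp add: sinh_add)
qed

text \<open>A discrete maximum principle: with superadditivity of \<open>sinh\<close> the recurrence makes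
  \<open>g\<close> convex along the steps, so once \<open>g\<close> is nonnegative and non-decreasing it stays so
  (in both directions from the double zero).\<close>
lemma sinh_recurrence_nonneg:
  fixes g ps E :: "int \<Rightarrow> real"
  assumes ps_pos: "\<And>m. ps m > 0" and E_nonneg: "\<And>m. E m \<ge> 0"
    and rec: "\<And>m. g (m + 1) * sinh (ps (m - 1)) =
        g m * sinh (ps (m - 1) + ps m) - g (m - 1) * sinh (ps m) + E m * sinh (ps (m - 1)) * sinh (ps m)"
    and "g j = 0" and "g (j + 1) = 0"
  shows "g m \<ge> 0"
proof -
  have sinh_facts: "sinh (ps (m - 1)) > 0" "sinh (ps m) > 0"
      "sinh (ps (m - 1)) + sinh (ps m) \<le> sinh (ps (m - 1) + ps m)"
      "E m * sinh (ps (m - 1)) * sinh (ps m) \<ge> 0" for m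
    using ps_pos E_nonneg by (auto intro: sinh_superadditive simp: less_imp_le)
  have step_up: "g m \<le> g (m + 1)" if "g m \<ge> 0" "g (m - 1) \<le> g m" for m
  proof -
    have "g (m - 1) * sinh (ps m) \<le> g m * sinh (ps m)"
      using that sinh_facts[of m] by (intro mult_right_mono) auto
    moreover have "g m * sinh (ps (m - 1)) \<le> g m * (sinh (ps (m - 1) + ps m) - sinh (ps m))"
      using that sinh_facts[of m] by (intro mult_left_mono) auto
    moreover have "E m * sinh (ps (m - 1)) * sinh (ps m) \<ge> 0" by (rule sinh_facts(4))
    ultimately have "g m * sinh (ps (m - 1)) \<le> g (m + 1) * sinh (ps (m - 1))"
      using rec[of m] by (simp add: algebra_simps)
    then show ?thesis using sinh_facts[of m] by simp
  qed
  have step_down: "g m \<le> g (m - 1)" if "g m \<ge> 0" "g (m + 1) \<le> g m" for m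
  proof -
    have "g (m + 1) * sinh (ps (m - 1)) \<le> g m * sinh (ps (m - 1))"
      using that sinh_facts[of m] by (intro mult_right_mono) auto
    moreover have "g m * sinh (ps m) \<le> g m * (sinh (ps (m - 1) + ps m) - sinh (ps (m - 1)))"
      using that sinh_facts[of m] by (intro mult_left_mono) auto
    moreover have "E m * sinh (ps (m - 1)) * sinh (ps m) \<ge> 0" by (rule sinh_facts(4))
    ultimately have "g m * sinh (ps m) \<le> g (m - 1) * sinh (ps m)"
      using rec[of m] by (simp add: algebra_simps)
    then show ?thesis using sinh_facts[of m] by simp
  qed
  have forward: "0 \<le> g (j + 1 + int d) \<and> g (j + int d) \<le> g (j + 1 + int d)" for d :: nat
  proof (induction d)
    case (Suc d)
    then have "g (j + 1 + int d) \<le> g (j + 1 + int d + 1)" using step_up[of "j + 1 + int d"] by simp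
    with Suc show ?case by (simp add: algebra_simps)
  qed (use assms in simp)
  have backward: "0 \<le> g (j - int d) \<and> g (j - int d + 1) \<le> g (j - int d)" for d :: nat
  proof (induction d)
    case (Suc d)
    then have "g (j - int d) \<le> g (j - int d - 1)" using step_down[of "j - int d"] by simp
    with Suc show ?case by (simp add: algebra_simps)
  qed (use assms in simp)
  show ?thesis
  proof (cases "m \<ge> j + 1")
    case True
    then have "m = j + 1 + int (nat (m - j - 1))" by simp
    then show ?thesis using forward[of "nat (m - j - 1)"] by metis
  next
    case False
    then have "m = j - int (nat (j - m))" by simp
    then show ?thesis using backward[of "nat (j - m)"] by metis
  qed
qed

definition hyp_normal :: "real \<Rightarrow> real \<times> real" where "hyp_normal a = (sinh a, cosh a)"
definition hyp_tangent :: "real \<Rightarrow> real \<times> real" where "hyp_tangent a = (cosh a, sinh a)"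

lemma hyp_normal_in_hyperbola: "hyp_normal a \<in> hyperbola"
  unfolding hyperbola_def lor_def hyp_normal_def
  using cosh_mult_cosh_minus_sinh_mult_sinh[of a] by simp

lemma hyperbola_eq_hyp_normal: "eta \<in> hyperbola \<Longrightarrow> \<exists>th. eta = hyp_normal th"
proof -
  assume eta: "eta \<in> hyperbola"
  obtain e1 e2 where e: "eta = (e1, e2)" by fastforce
  have "e1 * e1 - e2 * e2 = -1" "e2 > 0" using eta unfolding e hyperbola_def lor_def by auto
  then have "e2 = sqrt (e1^2 + 1)"
    by (intro real_sqrt_unique[symmetric]) (auto simp: power2_eq_square algebra_simps)
  then have "eta = hyp_normal (arsinh e1)" unfolding e hyp_normal_def by (simp add: cosh_arsinh_real)
  then show ?thesis by blast
qed

lemma Hb_hyp_normal: "Hb s (hyp_normal a) = hyp_normal (a + s)"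
  unfolding Hb_def hyp_normal_def by (simp add: sinh_add cosh_add algebra_simps)

lemma lor_hyp_normal_add:
  "lor x (hyp_normal (a + b)) = cosh b * lor x (hyp_normal a) + sinh b * lor x (hyp_tangent a)"
  unfolding lor_def hyp_normal_def hyp_tangent_def by (simp add: sinh_add cosh_add algebra_simps)

lemma lor_hyp_normal_diff:
  "lor x (hyp_normal (a - b)) = cosh b * lor x (hyp_normal a) - sinh b * lor x (hyp_tangent a)"
  unfolding lor_def hyp_normal_def hyp_tangent_def by (simp add: sinh_diff cosh_diff algebra_simps)

lemma lor_hyp_tangent_add:
  "lor x (hyp_tangent (a + b)) = cosh b * lor x (hyp_tangent a) + sinh b * lor x (hyp_normal a)"
  unfolding lor_def hyp_normal_def hyp_tangent_def by (simp add: sinh_add cosh_add algebra_simps)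

lemma eq_if_lor_hyp_normal_tangent_eq:
  assumes "lor x (hyp_normal c) = lor y (hyp_normal c)" "lor x (hyp_tangent c) = lor y (hyp_tangent c)"
  shows "x = y"
proof -
  obtain x1 x2 y1 y2 where xy: "x = (x1, x2)" "y = (y1, y2)" by fastforce
  define d1 where "d1 = x1 - y1"
  define d2 where "d2 = x2 - y2"
  have N: "d1 * sinh c - d2 * cosh c = 0" and T: "d1 * cosh c - d2 * sinh c = 0"
    using assms unfolding xy lor_def hyp_normal_def hyp_tangent_def d1_def d2_def
    by (simp_all add: algebra_simps)
  have "d1 = cosh c * (d1 * cosh c - d2 * sinh c) - sinh c * (d1 * sinh c - d2 * cosh c)"
    using cosh_mult_cosh_minus_sinh_mult_sinh[of c] by (simp add: algebra_simps)
  moreover have "d2 = sinh c * (d1 * cosh c - d2 * sinh c) - cosh c * (d1 * sinh c - d2 * cosh c)"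
    using cosh_mult_cosh_minus_sinh_mult_sinh[of c] by (simp add: algebra_simps)
  ultimately show ?thesis using N T unfolding xy d1_def d2_def by simp
qed

locale cyclic_angles =
  fixes n :: nat and phi :: "nat \<Rightarrow> real"
  assumes n_ge_3: "n \<ge> 3" and phi_pos: "\<forall>i<n. phi i > 0"
begin

lemma prv_eq: "i < n \<Longrightarrow> prv n i = (if i = 0 then n - 1 else i - 1)"
  using n_ge_3 unfolding prv_def by (cases i) (auto simp: mod_if)

lemma nxt_eq: "i < n \<Longrightarrow> nxt n i = (if i = n - 1 then 0 else i + 1)"
  using n_ge_3 unfolding nxt_def by (auto simp: mod_if)

lemma prv_less: "i < n \<Longrightarrow> prv n i < n" using n_ge_3 by (auto simp: prv_eq)
lemma nxt_less: "i < n \<Longrightarrow> nxt n i < n" using n_ge_3 by (auto simp: nxt_eq)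
lemma prv_nxt: "i < n \<Longrightarrow> prv n (nxt n i) = i" using n_ge_3 by (auto simp: prv_eq nxt_eq nxt_less)
lemma nxt_neq: "i < n \<Longrightarrow> nxt n i \<noteq> i" using n_ge_3 by (auto simp: nxt_eq)
lemma prv_neq: "i < n \<Longrightarrow> prv n i \<noteq> i" using n_ge_3 by (auto simp: prv_eq)
lemma nxt_neq_prv: "i < n \<Longrightarrow> nxt n i \<noteq> prv n i" using n_ge_3 by (auto simp: prv_eq nxt_eq)

lemma bij_betw_nxt: "bij_betw (nxt n) {..<n} {..<n}"
proof -
  have "inj_on (nxt n) {..<n}" by (metis inj_onI lessThan_iff prv_nxt)
  moreover have "nxt n ` {..<n} \<subseteq> {..<n}" using nxt_less by auto
  ultimately show ?thesis by (simp add: bij_betw_def endo_inj_surj)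
qed

lemma coarea_eq_sum_ell: "coarea n phi h k = 1/2 * (\<Sum>i<n. h i * ell n phi i k)"
  unfolding coarea_def ell_def by (simp add: distrib_left)

text \<open>Regrouping the sum by the edges \<open>(i, i+1)\<close>: the contribution of edge \<open>i\<close> exceeds
  \<open>(cosh \<phi>\<^sub>i - 1)/sinh \<phi>\<^sub>i \<cdot> w\<^sub>i\<^sup>2\<close> by \<open>((cosh \<phi>\<^sub>i - 1) w\<^sub>i\<^sub>+\<^sub>1\<^sup>2 + (w\<^sub>i - w\<^sub>i\<^sub>+\<^sub>1)\<^sup>2)/sinh \<phi>\<^sub>i\<close>.\<close>
lemma sum_ell_quadratic_lower_bound:
  "(\<Sum>i<n. (cosh (phi i) - 1) / sinh (phi i) * (w i)^2) \<le> (\<Sum>i<n. w i * ell n phi i w)"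
proof -
  let ?A = "\<lambda>i. w i * (w i * cosh (phi (prv n i)) - w (prv n i)) / sinh (phi (prv n i))"
  let ?B = "\<lambda>i. w i * (w i * cosh (phi i) - w (nxt n i)) / sinh (phi i)"
  let ?A' = "\<lambda>i. w (nxt n i) * (w (nxt n i) * cosh (phi i) - w i) / sinh (phi i)"
  have "(\<Sum>i<n. w i * ell n phi i w) = sum ?A {..<n} + sum ?B {..<n}"
    unfolding ell_def sum.distrib[symmetric] by (simp add: distrib_left)
  also have "sum ?A {..<n} = sum (?A \<circ> nxt n) {..<n}"
    using sum.reindex_bij_betw[OF bij_betw_nxt, of ?A] by simp
  also have "\<dots> = sum ?A' {..<n}" by (rule sum.cong) (auto simp: prv_nxt)
  finally have regroup: "(\<Sum>i<n. w i * ell n phi i w) = (\<Sum>i<n. ?A' i + ?B i)"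
    by (simp add: sum.distrib)
  have "(cosh (phi i) - 1) / sinh (phi i) * (w i)^2 \<le> ?A' i + ?B i" if "i < n" for i
  proof -
    let ?x = "w i" and ?y = "w (nxt n i)" and ?c = "cosh (phi i)"
    have "0 \<le> (?c - 1) * ?y^2 + (?x - ?y)^2" using cosh_real_ge_1[of "phi i"] by simp
    then have "(?c - 1) * ?x^2 \<le> ?y * (?y * ?c - ?x) + ?x * (?x * ?c - ?y)"
      by (simp add: algebra_simps power2_eq_square)
    moreover have "sinh (phi i) > 0" using phi_pos that by simp
    ultimately have "(?c - 1) * ?x^2 / sinh (phi i) \<le> (?y * (?y * ?c - ?x) + ?x * (?x * ?c - ?y)) / sinh (phi i)"
      by (simp add: divide_right_mono)
    then show ?thesis by (simp add: add_divide_distrib)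
  qed
  then show ?thesis unfolding regroup by (intro sum_mono) auto
qed

lemma coarea_pos_definite:
  assumes "w \<in> vecs n" "coarea n phi w w = 0" shows "w = (\<lambda>_. 0)"
proof
  fix j
  let ?q = "\<lambda>i. (cosh (phi i) - 1) / sinh (phi i) * (w i)^2"
  have q_nonneg: "\<forall>i\<in>{..<n}. 0 \<le> ?q i"
    using phi_pos cosh_real_ge_1 by (auto intro!: divide_nonneg_pos mult_nonneg_nonneg)
  have "sum ?q {..<n} \<le> 0"
    using sum_ell_quadratic_lower_bound[of w] assms(2) by (simp add: coarea_eq_sum_ell)
  then have "sum ?q {..<n} = 0" using q_nonneg by (meson antisym sum_nonneg)
  then have q_zero: "?q i = 0" if "i < n" for i using q_nonneg that by (meson finite_lessThan lessThan_iff sum_nonneg_eq_0_iff)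
  have "w i = 0" if "i < n" for i
    using q_zero[OF that] phi_pos that by auto
  then show "w j = 0" using assms(1) unfolding vecs_def by (cases "j < n") auto
qed

definition ell_repr :: "nat \<Rightarrow> nat \<Rightarrow> real" where "ell_repr k = (\<lambda>i. if i = k then 2 else 0)"

lemma coarea_ell_repr: "k < n \<Longrightarrow> coarea n phi (ell_repr k) h = ell n phi k h"
proof -
  assume k: "k < n"
  have "(\<Sum>i<n. ell_repr k i * ell n phi i h) = (\<Sum>i<n. if i = k then 2 * ell n phi k h else 0)"
    by (rule sum.cong) (auto simp: ell_repr_def)
  with k show ?thesis by (simp add: coarea_eq_sum_ell)
qed

lemma riesz_ell: assumes k: "k < n" shows "riesz n (coarea n phi) (ell n phi k) = ell_repr k"
  unfolding riesz_def
proof (rule the_equality)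
  have "ell_repr k \<in> vecs n" using k by (simp add: vecs_def ell_repr_def)
  with coarea_ell_repr[OF k]
  show "ell_repr k \<in> vecs n \<and> (\<forall>h\<in>vecs n. coarea n phi (ell_repr k) h = ell n phi k h)" by simp
next
  fix u assume u: "u \<in> vecs n \<and> (\<forall>h\<in>vecs n. coarea n phi u h = ell n phi k h)"
  let ?w = "\<lambda>i. u i - ell_repr k i"
  have w: "?w \<in> vecs n" using u k unfolding vecs_def ell_repr_def by auto
  have "coarea n phi ?w ?w = coarea n phi u ?w - coarea n phi (ell_repr k) ?w"
    by (simp add: coarea_eq_sum_ell left_diff_distrib sum_subtractf right_diff_distrib)
  also have "\<dots> = 0" using u w coarea_ell_repr[OF k] by simp
  finally have "?w = (\<lambda>_. 0)" using coarea_pos_definite w by blast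
  then show "u = ell_repr k" by (simp add: fun_eq_iff)
qed

lemma ell_linearly_independent:
  assumes "\<forall>h\<in>vecs n. (\<Sum>k<n. c k * ell n phi k h) = 0" shows "\<forall>k<n. c k = 0"
proof -
  let ?c = "\<lambda>i. if i < n then c i else 0"
  have c: "?c \<in> vecs n" by (simp add: vecs_def)
  have "(\<Sum>k<n. c k * ell n phi k ?c) = (\<Sum>k<n. ?c k * ell n phi k ?c)" by simp
  then have "coarea n phi ?c ?c = 0" using assms c by (simp add: coarea_eq_sum_ell)
  then have "?c = (\<lambda>_. 0)" using coarea_pos_definite c by blast
  then show ?thesis by (metis (mono_tags, lifting))
qed

lemma ell_normals_orthogonal:
  assumes "k < n" "j < n" "j \<noteq> k" "j \<noteq> nxt n k" "j \<noteq> prv n k"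
  shows "coarea n phi (riesz n (coarea n phi) (ell n phi k)) (riesz n (coarea n phi) (ell n phi j)) = 0"
  using assms by (simp add: riesz_ell coarea_ell_repr) (simp add: ell_def ell_repr_def)

lemma coarea_ell_repr_self:
  assumes k: "k < n"
  shows "coarea n phi (ell_repr k) (ell_repr k) =
     2 * (sinh (phi (prv n k) + phi k) / (sinh (phi (prv n k)) * sinh (phi k)))"
  using k prv_neq[OF k] nxt_neq[OF k] phi_pos prv_less[OF k] coth_add_coth[of "phi (prv n k)" "phi k"]
  by (simp add: coarea_ell_repr) (simp add: ell_def ell_repr_def add_divide_distrib)

lemma coarea_ell_repr_nxt:
  assumes k: "k < n"
  shows "coarea n phi (ell_repr k) (ell_repr (nxt n k)) = - 2 / sinh (phi k)"
  using k nxt_neq[OF k] nxt_neq_prv[OF k] by (simp add: coarea_ell_repr) (simp add: ell_def ell_repr_def)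

lemma dihedral_ell_nxt:
  assumes k: "k < n"
  shows "0 < dihedral n (coarea n phi) (ell n phi k) (ell n phi (nxt n k))
       \<and> dihedral n (coarea n phi) (ell n phi k) (ell n phi (nxt n k)) < pi / 2
       \<and> cos (dihedral n (coarea n phi) (ell n phi k) (ell n phi (nxt n k)))
           = sqrt (sinh (phi (prv n k)) * sinh (phi (nxt n k)) /
                   (sinh (phi (prv n k) + phi k) * sinh (phi k + phi (nxt n k))))"
proof -
  define a where "a = phi (prv n k)"
  define b where "b = phi k"
  define c where "c = phi (nxt n k)"
  have k': "nxt n k < n" using nxt_less k by auto
  have abc: "a > 0" "b > 0" "c > 0" using phi_pos prv_less nxt_less k unfolding a_def b_def c_def by auto
  then have pos: "sinh a > 0" "sinh b > 0" "sinh c > 0" "sinh (a + b) > 0" "sinh (b + c) > 0" by auto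
  have uu: "coarea n phi (ell_repr k) (ell_repr k) = 2 * (sinh (a + b) / (sinh a * sinh b))"
    using coarea_ell_repr_self[OF k] unfolding a_def b_def .
  have vv: "coarea n phi (ell_repr (nxt n k)) (ell_repr (nxt n k)) = 2 * (sinh (b + c) / (sinh b * sinh c))"
    using coarea_ell_repr_self[OF k'] prv_nxt[OF k] unfolding b_def c_def by simp
  define r where "r = 2 / sinh b / sqrt (2 * (sinh (a + b) / (sinh a * sinh b)) * (2 * (sinh (b + c) / (sinh b * sinh c))))"
  have dihedral_eq: "dihedral n (coarea n phi) (ell n phi k) (ell n phi (nxt n k)) = arccos r"
    unfolding dihedral_def Let_def riesz_ell[OF k] riesz_ell[OF k'] coarea_ell_repr_nxt[OF k] uu vv r_def
    by (simp add: b_def)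
  have r_pos: "r > 0" unfolding r_def using pos by simp
  have r_sq: "r^2 = sinh a * sinh c / (sinh (a + b) * sinh (b + c))"
    unfolding r_def using pos by (simp add: power_divide field_simps power2_eq_square)
  have "sinh a * sinh c < sinh (a + b) * sinh (b + c)"
    using abc pos by (intro mult_strict_mono) auto
  then have "r^2 < 1" unfolding r_sq using pos by simp
  then have r_less_1: "r < 1" using r_pos by (smt (verit) one_le_power)
  have "sqrt (sinh a * sinh c / (sinh (a + b) * sinh (b + c))) = r"
    using r_sq r_pos by (intro real_sqrt_unique) auto
  moreover have "0 < arccos r" using arccos_less_arccos[of r 1] r_pos r_less_1 by simp
  moreover have "arccos r < pi / 2" using arccos_less_arccos[of 0 r] r_pos r_less_1 by simp
  ultimately show ?thesis
    unfolding dihedral_eq a_def b_def c_def using r_pos r_less_1 by simp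
qed

text \<open>The normals of the polygon, indexed by \<open>m \<in> \<int>\<close>: the \<open>m\<close>-th one is
  \<open>H\<^sub>t\<^sup>q \<eta>\<^sub>r\<close> for \<open>m = q n + r\<close>, i.e. \<open>hyp_normal (\<theta> + normal_angle m)\<close> when \<open>\<eta> = hyp_normal \<theta>\<close>.\<close>
definition angle_sum :: "nat \<Rightarrow> real" where "angle_sum i = (\<Sum>l<i. phi l)"
definition normal_angle :: "int \<Rightarrow> real" where
  "normal_angle m = of_int (m div int n) * angle_sum n + angle_sum (nat (m mod int n))"
definition phi_cyc :: "int \<Rightarrow> real" where "phi_cyc m = phi (nat (m mod int n))"
definition h_cyc :: "(nat \<Rightarrow> real) \<Rightarrow> int \<Rightarrow> real" where "h_cyc h m = h (nat (m mod int n))"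

lemma n_pos: "int n > 0" using n_ge_3 by simp

lemma nat_mod_less: "nat (m mod int n) < n"
  using n_pos by (simp add: nat_less_iff)

lemma phi_cyc_pos: "phi_cyc m > 0" using phi_pos nat_mod_less unfolding phi_cyc_def by blast

lemma angle_sum_Suc: "angle_sum (Suc i) = angle_sum i + phi i" unfolding angle_sum_def by simp

lemma angle_sum_strict_mono: "i < j \<Longrightarrow> j \<le> n \<Longrightarrow> angle_sum i < angle_sum j"
proof (induction j)
  case (Suc j)
  then have "phi j > 0" using phi_pos by auto
  with Suc show ?case by (cases "i = j") (auto simp: angle_sum_Suc)
qed simp

lemma normal_angle_nat: "i < n \<Longrightarrow> normal_angle (int i) = angle_sum i"
  unfolding normal_angle_def by simp

lemma h_cyc_nat: "i < n \<Longrightarrow> h_cyc h (int i) = h i"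
  unfolding h_cyc_def by simp

lemma normal_angle_succ: "normal_angle (m + 1) = normal_angle m + phi_cyc m"
proof -
  define q where "q = m div int n"
  define r where "r = m mod int n"
  have mqr: "q * int n + r = m" unfolding q_def r_def by simp
  have r: "0 \<le> r" "r < int n" unfolding r_def using n_pos by auto
  have mod_succ: "(m + 1) mod int n = (r + 1) mod int n" unfolding r_def by (simp add: mod_add_left_eq)
  have div_succ: "((m + 1) div int n) * int n = m + 1 - (m + 1) mod int n"
    by (simp add: minus_mod_eq_div_mult)
  show ?thesis
  proof (cases "r + 1 < int n")
    case True
    have md: "(m + 1) mod int n = r + 1" using mod_succ True r by simp
    then have "((m + 1) div int n) * int n = q * int n" using div_succ mqr by simp
    then have "(m + 1) div int n = q" using n_pos by simp
    moreover have "nat (r + 1) = Suc (nat r)" using r by simp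
    ultimately show ?thesis unfolding normal_angle_def phi_cyc_def using md
      by (simp add: q_def[symmetric] r_def[symmetric] angle_sum_Suc)
  next
    case False
    then have rr: "r + 1 = int n" using r by simp
    have md: "(m + 1) mod int n = 0" using mod_succ rr by simp
    have "((m + 1) div int n) * int n = m + 1" using div_succ md by simp
    also have "\<dots> = (q + 1) * int n" using mqr rr by (simp add: algebra_simps)
    finally have "((m + 1) div int n) * int n = (q + 1) * int n" .
    then have "(m + 1) div int n = q + 1" using n_pos by simp
    moreover have "angle_sum n = angle_sum (nat r) + phi (nat r)"
      using rr r angle_sum_Suc[of "nat r"] by (simp add: Suc_nat_eq_nat_zadd1 add.commute)
    ultimately show ?thesis unfolding normal_angle_def phi_cyc_def using md
      by (simp add: q_def[symmetric] r_def[symmetric] angle_sum_def algebra_simps)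
  qed
qed

lemma normal_angle_pred: "normal_angle (m - 1) = normal_angle m - phi_cyc (m - 1)"
  using normal_angle_succ[of "m - 1"] by simp

lemma ell_nat_mod: "ell n phi (nat (m mod int n)) h =
   (h_cyc h m * cosh (phi_cyc (m - 1)) - h_cyc h (m - 1)) / sinh (phi_cyc (m - 1)) +
   (h_cyc h m * cosh (phi_cyc m) - h_cyc h (m + 1)) / sinh (phi_cyc m)"
proof -
  have "int (nxt n (nat (m mod int n))) = (m mod int n + 1) mod int n"
    unfolding nxt_def using n_pos by (simp add: zmod_int add.commute)
  then have nxt: "nxt n (nat (m mod int n)) = nat ((m + 1) mod int n)"
    by (simp add: mod_add_left_eq)
  have "int (prv n (nat (m mod int n))) = (m mod int n + (int n - 1)) mod int n"
    unfolding prv_def using n_pos by (simp add: zmod_int of_nat_diff algebra_simps)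
  also have "\<dots> = (m + (int n - 1)) mod int n" by (simp add: mod_add_left_eq)
  also have "\<dots> = (m - 1 + int n) mod int n" by (simp add: algebra_simps)
  finally have prv: "prv n (nat (m mod int n)) = nat ((m - 1) mod int n)" by simp
  show ?thesis unfolding ell_def h_cyc_def phi_cyc_def prv nxt ..
qed

lemma fund_normals_hyp_normal: "fund_normals phi (hyp_normal th) i = hyp_normal (th + angle_sum i)"
  unfolding fund_normals_def angle_sum_def by (simp add: Hb_hyp_normal add.commute)

lemma inj_on_fund_normals: "inj_on (fund_normals phi (hyp_normal th)) {..<n}"
proof (rule inj_onI)
  fix i j assume "i \<in> {..<n}" "j \<in> {..<n}"
    and eq: "fund_normals phi (hyp_normal th) i = fund_normals phi (hyp_normal th) j"
  have "hyp_normal (th + angle_sum i) = hyp_normal (th + angle_sum j)"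
    using eq by (simp only: fund_normals_hyp_normal)
  then have "sinh (th + angle_sum i) = sinh (th + angle_sum j)" by (simp add: hyp_normal_def)
  then have "angle_sum i = angle_sum j" by simp
  with \<open>i \<in> {..<n}\<close> \<open>j \<in> {..<n}\<close> show "i = j" using angle_sum_strict_mono by (metis lessThan_iff linorder_neqE_nat less_imp_le less_irrefl)
qed

abbreviation polygon :: "real \<Rightarrow> (nat \<Rightarrow> real) \<Rightarrow> (real \<times> real) set" where
  "polygon th h \<equiv> tpoly (angle_sum n) n (fund_normals phi (hyp_normal th)) h"

lemma mem_polygon_iff:
  "x \<in> polygon th h \<longleftrightarrow> (\<forall>m. lor x (hyp_normal (th + normal_angle m)) \<le> - h_cyc h m)"
proof
  assume x: "x \<in> polygon th h"
  show "\<forall>m. lor x (hyp_normal (th + normal_angle m)) \<le> - h_cyc h m"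
  proof
    fix m
    have "lor x (Hb (of_int (m div int n) * angle_sum n) (fund_normals phi (hyp_normal th) (nat (m mod int n))))
          \<le> - h (nat (m mod int n))"
      using x nat_mod_less unfolding tpoly_def by blast
    then show "lor x (hyp_normal (th + normal_angle m)) \<le> - h_cyc h m"
      unfolding fund_normals_hyp_normal Hb_hyp_normal normal_angle_def h_cyc_def by (simp add: algebra_simps)
  qed
next
  assume x: "\<forall>m. lor x (hyp_normal (th + normal_angle m)) \<le> - h_cyc h m"
  show "x \<in> polygon th h"
    unfolding tpoly_def
  proof (intro CollectI allI impI)
    fix k :: int and i assume i: "i < n"
    let ?m = "k * int n + int i"
    have "?m div int n = k" "?m mod int n = int i" using i n_pos by simp_all
    moreover have "lor x (hyp_normal (th + normal_angle ?m)) \<le> - h_cyc h ?m" using x by blast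
    ultimately show "lor x (Hb (of_int k * angle_sum n) (fund_normals phi (hyp_normal th) i)) \<le> - h i"
      unfolding fund_normals_hyp_normal Hb_hyp_normal normal_angle_def h_cyc_def by (simp add: algebra_simps)
  qed
qed

lemma genuine_edge_imp_ell_pos:
  assumes i: "i < n" and edge: "genuine_edge (angle_sum n) n (fund_normals phi (hyp_normal th)) h i"
  shows "ell n phi i h > 0"
proof -
  define c where "c = th + normal_angle (int i)"
  define u where "u = phi_cyc (int i - 1)"
  define v where "v = phi_cyc (int i)"
  have su: "sinh u > 0" and sv: "sinh v > 0" unfolding u_def v_def using phi_cyc_pos by auto
  have normal_i: "fund_normals phi (hyp_normal th) i = hyp_normal c"
    unfolding fund_normals_hyp_normal c_def using normal_angle_nat i by simp
  have tangent_bounds: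
    "(h_cyc h (int i - 1) - h i * cosh u) / sinh u \<le> lor z (hyp_tangent c)
     \<and> lor z (hyp_tangent c) \<le> (h i * cosh v - h_cyc h (int i + 1)) / sinh v"
    if z: "z \<in> polygon th h" "lor z (hyp_normal c) = - h i" for z
  proof -
    have all: "\<forall>m. lor z (hyp_normal (th + normal_angle m)) \<le> - h_cyc h m"
      using z(1) mem_polygon_iff by blast
    have "lor z (hyp_normal (c + v)) \<le> - h_cyc h (int i + 1)"
      using all[rule_format, of "int i + 1"] unfolding c_def v_def normal_angle_succ by (simp add: add.assoc)
    then have "- h i * cosh v + sinh v * lor z (hyp_tangent c) \<le> - h_cyc h (int i + 1)"
      unfolding lor_hyp_normal_add z(2) by (simp add: algebra_simps)
    then have upper: "lor z (hyp_tangent c) \<le> (h i * cosh v - h_cyc h (int i + 1)) / sinh v"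
      using sv by (simp add: pos_le_divide_eq algebra_simps)
    have "lor z (hyp_normal (c - u)) \<le> - h_cyc h (int i - 1)"
      using all[rule_format, of "int i - 1"] unfolding c_def u_def normal_angle_pred by (simp add: algebra_simps)
    then have "- h i * cosh u - sinh u * lor z (hyp_tangent c) \<le> - h_cyc h (int i - 1)"
      unfolding lor_hyp_normal_diff z(2) by (simp add: algebra_simps)
    then have lower: "(h_cyc h (int i - 1) - h i * cosh u) / sinh u \<le> lor z (hyp_tangent c)"
      using su by (simp add: pos_divide_le_eq algebra_simps)
    from upper lower show ?thesis by simp
  qed
  obtain x y where xy: "x \<noteq> y" "x \<in> polygon th h" "y \<in> polygon th h"
     "lor x (hyp_normal c) = - h i" "lor y (hyp_normal c) = - h i"
    using edge unfolding genuine_edge_def normal_i by blast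
  then have "lor x (hyp_tangent c) \<noteq> lor y (hyp_tangent c)"
    using eq_if_lor_hyp_normal_tangent_eq by metis
  then have "(h_cyc h (int i - 1) - h i * cosh u) / sinh u < (h i * cosh v - h_cyc h (int i + 1)) / sinh v"
    using tangent_bounds[OF xy(2,4)] tangent_bounds[OF xy(3,5)] by linarith
  moreover have "ell n phi i h = (h i * cosh v - h_cyc h (int i + 1)) / sinh v
      - (h_cyc h (int i - 1) - h i * cosh u) / sinh u"
    using ell_nat_mod[of "int i" h] i unfolding u_def v_def by (simp add: h_cyc_nat diff_divide_distrib)
  ultimately show ?thesis by simp
qed

text \<open>The vertex between the support lines \<open>j\<close> and \<open>j+1\<close>, given by its coordinates
  \<open>-h\<^sub>j\<close> and \<open>vertex_tangent h j\<close> in the frame \<open>(hyp_normal, hyp_tangent)\<close> at the \<open>j\<close>-th normal.\<close>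
definition vertex_tangent :: "(nat \<Rightarrow> real) \<Rightarrow> int \<Rightarrow> real" where
  "vertex_tangent h j = (h_cyc h j * cosh (phi_cyc j) - h_cyc h (j + 1)) / sinh (phi_cyc j)"

definition vertex :: "real \<Rightarrow> (nat \<Rightarrow> real) \<Rightarrow> int \<Rightarrow> real \<times> real" where
  "vertex th h j = (let a = th + normal_angle j in
     (h_cyc h j * sinh a + vertex_tangent h j * cosh a, h_cyc h j * cosh a + vertex_tangent h j * sinh a))"

lemma lor_vertex_hyp_normal: "lor (vertex th h j) (hyp_normal (th + normal_angle j)) = - h_cyc h j"
  unfolding vertex_def Let_def lor_def hyp_normal_def
  using cosh_mult_cosh_minus_sinh_mult_sinh[of "th + normal_angle j"] by (simp add: algebra_simps)

lemma lor_vertex_hyp_tangent: "lor (vertex th h j) (hyp_tangent (th + normal_angle j)) = vertex_tangent h j"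
  unfolding vertex_def Let_def lor_def hyp_tangent_def
  using cosh_mult_cosh_minus_sinh_mult_sinh[of "th + normal_angle j"] by (simp add: algebra_simps)

lemma lor_vertex_hyp_normal_succ:
  "lor (vertex th h j) (hyp_normal (th + normal_angle (j + 1))) = - h_cyc h (j + 1)"
proof -
  have "lor (vertex th h j) (hyp_normal (th + normal_angle (j + 1)))
      = cosh (phi_cyc j) * (- h_cyc h j) + sinh (phi_cyc j) * vertex_tangent h j"
    unfolding normal_angle_succ add.assoc[symmetric]
    by (simp only: lor_hyp_normal_add[of _ "th + normal_angle j" "phi_cyc j"]
        lor_vertex_hyp_normal lor_vertex_hyp_tangent)
  also have "\<dots> = - h_cyc h (j + 1)"
    unfolding vertex_tangent_def using phi_cyc_pos[of j] by (simp add: field_simps)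
  finally show ?thesis .
qed

lemma lor_vertex_hyp_tangent_succ:
  "lor (vertex th h j) (hyp_tangent (th + normal_angle (j + 1)))
     = (h_cyc h j - h_cyc h (j + 1) * cosh (phi_cyc j)) / sinh (phi_cyc j)"
proof -
  have "lor (vertex th h j) (hyp_tangent (th + normal_angle (j + 1)))
      = cosh (phi_cyc j) * vertex_tangent h j + sinh (phi_cyc j) * (- h_cyc h j)"
    unfolding normal_angle_succ add.assoc[symmetric]
    by (simp only: lor_hyp_tangent_add[of _ "th + normal_angle j" "phi_cyc j"]
        lor_vertex_hyp_normal lor_vertex_hyp_tangent)
  also have "\<dots> = (h_cyc h j * (cosh (phi_cyc j) * cosh (phi_cyc j) - sinh (phi_cyc j) * sinh (phi_cyc j))
                   - h_cyc h (j + 1) * cosh (phi_cyc j)) / sinh (phi_cyc j)"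
    unfolding vertex_tangent_def using phi_cyc_pos[of j] by (simp add: field_simps)
  finally show ?thesis using cosh_mult_cosh_minus_sinh_mult_sinh by simp
qed

lemma slack_recurrence:
  "(- lor x (hyp_normal (th + normal_angle (m + 1))) - h_cyc h (m + 1)) * sinh (phi_cyc (m - 1)) =
     (- lor x (hyp_normal (th + normal_angle m)) - h_cyc h m) * sinh (phi_cyc (m - 1) + phi_cyc m)
     - (- lor x (hyp_normal (th + normal_angle (m - 1))) - h_cyc h (m - 1)) * sinh (phi_cyc m)
     + ell n phi (nat (m mod int n)) h * sinh (phi_cyc (m - 1)) * sinh (phi_cyc m)"
proof -
  define c where "c = th + normal_angle m"
  define u where "u = phi_cyc (m - 1)"
  define v where "v = phi_cyc m"
  have "sinh u > 0" "sinh v > 0" unfolding u_def v_def using phi_cyc_pos by auto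
  then have "ell n phi (nat (m mod int n)) h * sinh u * sinh v =
      (h_cyc h m * cosh u - h_cyc h (m - 1)) * sinh v + (h_cyc h m * cosh v - h_cyc h (m + 1)) * sinh u"
    unfolding ell_nat_mod u_def[symmetric] v_def[symmetric] by (simp add: field_simps)
  moreover have succ: "th + normal_angle (m + 1) = c + v" and pred: "th + normal_angle (m - 1) = c - u"
    unfolding c_def u_def v_def normal_angle_succ normal_angle_pred by simp_all
  ultimately show ?thesis
    unfolding succ pred lor_hyp_normal_add lor_hyp_normal_diff c_def[symmetric] u_def[symmetric] v_def[symmetric]
    by (simp add: sinh_add algebra_simps)
qed

lemma vertex_in_polygon:
  assumes "\<forall>k<n. ell n phi k h \<ge> 0" shows "vertex th h j \<in> polygon th h"
proof -
  have "- lor (vertex th h j) (hyp_normal (th + normal_angle m)) - h_cyc h m \<ge> 0" for m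
  proof (rule sinh_recurrence_nonneg[where ps = phi_cyc and E = "\<lambda>m. ell n phi (nat (m mod int n)) h" and j = j])
    show "\<And>m. ell n phi (nat (m mod int n)) h \<ge> 0" using assms nat_mod_less by blast
  qed (simp_all add: phi_cyc_pos slack_recurrence lor_vertex_hyp_normal lor_vertex_hyp_normal_succ)
  then show ?thesis unfolding mem_polygon_iff by (smt (verit))
qed

lemma ell_pos_imp_genuine_edge:
  assumes i: "i < n" and ell_pos: "\<forall>k<n. ell n phi k h > 0"
  shows "genuine_edge (angle_sum n) n (fund_normals phi (hyp_normal th)) h i"
proof -
  define x where "x = vertex th h (int i)"
  define y where "y = vertex th h (int i - 1)"
  define c where "c = th + normal_angle (int i)"
  have normal_i: "fund_normals phi (hyp_normal th) i = hyp_normal c"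
    unfolding fund_normals_hyp_normal c_def using normal_angle_nat i by simp
  have polygon: "x \<in> polygon th h" "y \<in> polygon th h"
    unfolding x_def y_def using vertex_in_polygon ell_pos by (simp_all add: less_imp_le)
  have on_line: "lor x (hyp_normal c) = - h i" "lor y (hyp_normal c) = - h i"
    unfolding x_def y_def c_def
    using lor_vertex_hyp_normal lor_vertex_hyp_normal_succ[of th h "int i - 1"] h_cyc_nat i by simp_all
  have "ell n phi i h = lor x (hyp_tangent c) - lor y (hyp_tangent c)"
    unfolding x_def y_def c_def lor_vertex_hyp_tangent vertex_tangent_def
    using lor_vertex_hyp_tangent_succ[of th h "int i - 1"] ell_nat_mod[of "int i" h] i
    by (simp add: diff_divide_distrib)
  then have "x \<noteq> y" using ell_pos i by auto
  then show ?thesis unfolding genuine_edge_def normal_i using polygon on_line by blast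
qed

text \<open>At an index where \<open>h\<close> is minimal, \<open>\<ell>\<^sub>i(h) \<le> h\<^sub>i ((cosh \<phi>\<^sub>i\<^sub>-\<^sub>1 - 1)/sinh \<phi>\<^sub>i\<^sub>-\<^sub>1 + (cosh \<phi>\<^sub>i - 1)/sinh \<phi>\<^sub>i)\<close>.\<close>
lemma ell_pos_imp_pos:
  assumes ell_pos: "\<forall>k<n. ell n phi k h > 0" shows "\<forall>k<n. h k > 0"
proof -
  have fin: "finite (h ` {..<n})" by simp
  have "h ` {..<n} \<noteq> {}" using n_ge_3 by (simp add: lessThan_empty_iff)
  from Min_in[OF fin this] obtain i where i: "i < n" "h i = Min (h ` {..<n})" by auto
  have min: "h i \<le> h k" if "k < n" for k using i(2) Min_le[OF fin] that by simp
  define a where "a = phi (prv n i)"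
  define b where "b = phi i"
  have ab: "a > 0" "b > 0" unfolding a_def b_def using phi_pos prv_less i by auto
  have "(h i * cosh a - h (prv n i)) / sinh a \<le> (h i * cosh a - h i) / sinh a"
    using min[OF prv_less[OF i(1)]] ab by (intro divide_right_mono) auto
  moreover have "(h i * cosh b - h (nxt n i)) / sinh b \<le> (h i * cosh b - h i) / sinh b"
    using min[OF nxt_less[OF i(1)]] ab by (intro divide_right_mono) auto
  ultimately have "ell n phi i h \<le> h i * ((cosh a - 1) / sinh a + (cosh b - 1) / sinh b)"
    unfolding ell_def a_def[symmetric] b_def[symmetric] by (simp add: algebra_simps diff_divide_distrib)
  moreover have "(cosh a - 1) / sinh a + (cosh b - 1) / sinh b > 0"
    using ab cosh_minus_one_div_sinh_pos by (simp add: add_pos_pos)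
  ultimately have "h i > 0" using ell_pos i(1) by (smt (verit) mult_nonpos_nonneg)
  then show ?thesis using min by (meson less_le_trans)
qed

lemma supp_cone_iff_ell_pos:
  assumes "eta \<in> hyperbola"
  shows "h \<in> supp_cone n phi eta \<longleftrightarrow> h \<in> vecs n \<and> (\<forall>k<n. ell n phi k h > 0)"
proof -
  obtain th where th: "eta = hyp_normal th" using hyperbola_eq_hyp_normal assms by blast
  show ?thesis
    unfolding supp_cone_def angle_sum_def[symmetric] th is_support_vector_def mem_Collect_eq
    using genuine_edge_imp_ell_pos ell_pos_imp_genuine_edge ell_pos_imp_pos inj_on_fund_normals
      hyp_normal_in_hyperbola fund_normals_hyp_normal by metis
qed

end

theorem mainTheorem5:
  fixes n :: nat and phi :: "nat \<Rightarrow> real" and t :: real and eta :: "real \<times> real"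
  assumes "n \<ge> 3"
    and "t > 0"
    and "\<forall>i<n. phi i > 0"
    and "(\<Sum>i<n. phi i) = t"
    and "eta \<in> hyperbola"
  shows
    "supp_cone n phi eta \<inter> {h. coarea n phi h h = 1}
       = {h \<in> vecs n. coarea n phi h h = 1 \<and> (\<forall>k<n. ell n phi k h > 0)}
     \<and> (\<forall>c. (\<forall>h\<in>vecs n. (\<Sum>k<n. c k * ell n phi k h) = 0) \<longrightarrow> (\<forall>k<n. c k = 0))
     \<and> (\<forall>k<n. 0 < dihedral n (coarea n phi) (ell n phi k) (ell n phi (nxt n k))
              \<and> dihedral n (coarea n phi) (ell n phi k) (ell n phi (nxt n k)) < pi / 2
              \<and> cos (dihedral n (coarea n phi) (ell n phi k) (ell n phi (nxt n k)))
                  = sqrt (sinh (phi (prv n k)) * sinh (phi (nxt n k)) /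
                          (sinh (phi (prv n k) + phi k) * sinh (phi k + phi (nxt n k)))))
     \<and> (\<forall>k<n. \<forall>j<n. j \<noteq> k \<and> j \<noteq> nxt n k \<and> j \<noteq> prv n k \<longrightarrow>
           coarea n phi (riesz n (coarea n phi) (ell n phi k))
                        (riesz n (coarea n phi) (ell n phi j)) = 0)"
proof -
  interpret cyclic_angles n phi using assms(1,3) by unfold_locales
  have "supp_cone n phi eta \<inter> {h. coarea n phi h h = 1}
       = {h \<in> vecs n. coarea n phi h h = 1 \<and> (\<forall>k<n. ell n phi k h > 0)}"
    using supp_cone_iff_ell_pos[OF assms(5)] by blast
  then show ?thesis using ell_linearly_independent dihedral_ell_nxt ell_normals_orthogonal by blast
qed

end
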